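(* Let $n\ge1$ and let $\mathcal{Z}=\{z_1,\dots,z_m\}\subset\mathbb{D}^n$ be $m$ distinct points, and $\mathcal{Q}_{\mathcal{Z}}=\operatorname{span}\{\mathbb{S}(\cdot,z_i):i=1,\dots,m\}$. Then $\mathcal{Z}$ is a Pick set if and only if $\mathcal{Q}_{\mathcal{Z}}$ satisfies the commutant lifting property.
   Context: $\mathbb{S}(z,w)=\prod_{i=1}^n(1-z_i\bar w_i)^{-1}$ is the Szegő kernel, $\mathbb{S}(\cdot,w)(z)=\mathbb{S}(z,w)$, an element of the Hardy space $H^2(\mathbb{T}^n)$. $\mathcal{S}(\mathbb{D}^n)$ is the closed unit ball of $H^\infty(\mathbb{D}^n)$. For $w_1,\dots,w_m\in\mathbb{D}$, the Pick matrix is $\big((1-w_i\bar w_j)\mathbb{S}(z_i,z_j)\big)_{i,j=1}^m$. $\mathcal{Z}$ is a Pick set if for every $w_1,\dots,w_m\in\mathbb{D}$ whose Pick matrix is positive semidefinite there exists $\varphi\in\mathcal{S}(\mathbb{D}^n)$ with $\varphi(z_i)=w_i$ for all $i$. A quotient module $\mathcal{Q}\subseteq H^2(\mathbb{T}^n)$ (closed, invariant under all $T_{z_i}^*$) satisfies the commutant lifting property if every contraction $X\in\mathcal{B}(\mathcal{Q})$ with $XS_{z_i}=S_{z_i}X$ for all $i$ (where $S_{z_i}=P_{\mathcal{Q}}T_{z_i}|_{\mathcal{Q}}$) is of the form $X=P_{\mathcal{Q}}T_\varphi|_{\mathcal{Q}}$ for some $\varphi\in\mathcal{S}(\mathbb{D}^n)$;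 here $T_\varphi f=\varphi f$ and $P_{\mathcal{Q}}$ is the orthogonal projection onto $\mathcal{Q}$. *)

theory Defs
  imports "HOL-Analysis.Analysis"
begin

text \<open>Elements of H^2(T^n) are represented by their Taylor coefficient families
  indexed by multi-indices  alpha :: 'n => nat  (the index type 'n is finite, CARD('n) = n).
  H^2 is identified isometrically with the square-summable coefficient families.\<close>

type_synonym 'n coeffs = "('n \<Rightarrow> nat) \<Rightarrow> complex"

definition polydisc :: "(complex ^ 'n) set" where
  "polydisc = {z. \<forall>k. cmod (z $ k) < 1}"

definition mon :: "complex ^ 'n \<Rightarrow> ('n \<Rightarrow> nat) \<Rightarrow> complex" where
  "mon z \<alpha> = (\<Prod>k\<in>UNIV. (z $ k) ^ \<alpha> k)"

text \<open>c is the Taylor coefficient family of phi on the polydisc (holomorphy on D^n).\<close>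
definition pw_series :: "'n coeffs \<Rightarrow> (complex ^ 'n \<Rightarrow> complex) \<Rightarrow> bool" where
  "pw_series c \<phi> \<longleftrightarrow> (\<forall>z\<in>polydisc. ((\<lambda>\<alpha>. c \<alpha> * mon z \<alpha>) has_sum \<phi> z) UNIV)"

definition schur :: "(complex ^ 'n \<Rightarrow> complex) \<Rightarrow> bool" where
  "schur \<phi> \<longleftrightarrow> (\<exists>c. pw_series c \<phi>) \<and> (\<forall>z\<in>polydisc. cmod (\<phi> z) \<le> 1)"

definition h2_inner :: "'n coeffs \<Rightarrow> 'n coeffs \<Rightarrow> complex" where
  "h2_inner f g = infsum (\<lambda>\<alpha>. f \<alpha> * cnj (g \<alpha>)) UNIV"

definition h2_norm :: "'n coeffs \<Rightarrow> real" where
  "h2_norm f = sqrt (infsum (\<lambda>\<alpha>. (cmod (f \<alpha>))\<^sup>2) UNIV)"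

definition szego_kernel :: "complex ^ 'n \<Rightarrow> complex ^ 'n \<Rightarrow> complex" where
  "szego_kernel z w = (\<Prod>k\<in>UNIV. inverse (1 - z $ k * cnj (w $ k)))"

definition szego :: "complex ^ 'n \<Rightarrow> 'n coeffs" where
  "szego w = (\<lambda>\<alpha>. \<Prod>k\<in>UNIV. cnj (w $ k) ^ \<alpha> k)"

definition QZ :: "nat \<Rightarrow> (nat \<Rightarrow> complex ^ 'n) \<Rightarrow> 'n coeffs set" where
  "QZ m z = {f. \<exists>a. f = (\<lambda>\<alpha>. \<Sum>i<m. a i * szego (z i) \<alpha>)}"

definition proj :: "'n coeffs set \<Rightarrow> 'n coeffs \<Rightarrow> 'n coeffs" where
  "proj Q g = (THE q. q \<in> Q \<and> (\<forall>k\<in>Q. h2_inner (\<lambda>\<alpha>. g \<alpha> - q \<alpha>) k = 0))"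

definition toep :: "('n::finite) coeffs \<Rightarrow> 'n coeffs \<Rightarrow> 'n coeffs" where
  "toep c f = (\<lambda>\<alpha>. \<Sum>\<beta>\<in>{\<beta>. \<forall>k. \<beta> k \<le> \<alpha> k}. c \<beta> * f (\<lambda>k. \<alpha> k - \<beta> k))"

definition zcoef :: "'n \<Rightarrow> 'n coeffs" where
  "zcoef k = (\<lambda>\<alpha>. if \<alpha> = (\<lambda>j. if j = k then 1 else 0) then 1 else 0)"

definition compr :: "('n::finite) coeffs set \<Rightarrow> 'n \<Rightarrow> 'n coeffs \<Rightarrow> 'n coeffs" where
  "compr Q k f = proj Q (toep (zcoef k) f)"

definition contraction_on :: "'n coeffs set \<Rightarrow> ('n coeffs \<Rightarrow> 'n coeffs) \<Rightarrow> bool" where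
  "contraction_on Q X \<longleftrightarrow>
     (\<forall>f\<in>Q. X f \<in> Q) \<and>
     (\<forall>f\<in>Q. \<forall>g\<in>Q. X (\<lambda>\<alpha>. f \<alpha> + g \<alpha>) = (\<lambda>\<alpha>. X f \<alpha> + X g \<alpha>)) \<and>
     (\<forall>f\<in>Q. \<forall>a. X (\<lambda>\<alpha>. a * f \<alpha>) = (\<lambda>\<alpha>. a * X f \<alpha>)) \<and>
     (\<forall>f\<in>Q. h2_norm (X f) \<le> h2_norm f)"

definition commutant_lifting :: "('n::finite) coeffs set \<Rightarrow> bool" where
  "commutant_lifting Q \<longleftrightarrow>
     (\<forall>X. contraction_on Q X \<and> (\<forall>k. \<forall>f\<in>Q. X (compr Q k f) = compr Q k (X f)) \<longrightarrow>
        (\<exists>\<phi> c. schur \<phi> \<and> pw_series c \<phi> \<and> (\<forall>f\<in>Q. X f = proj Q (toep c f))))"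

definition pick_psd :: "nat \<Rightarrow> (nat \<Rightarrow> complex ^ 'n) \<Rightarrow> (nat \<Rightarrow> complex) \<Rightarrow> bool" where
  "pick_psd m z w \<longleftrightarrow>
     (\<forall>v :: nat \<Rightarrow> complex.
        let s = (\<Sum>i<m. \<Sum>j<m. cnj (v i) * ((1 - w i * cnj (w j)) * szego_kernel (z i) (z j)) * v j)
        in Im s = 0 \<and> Re s \<ge> 0)"

definition pick_set :: "nat \<Rightarrow> (nat \<Rightarrow> complex ^ 'n) \<Rightarrow> bool" where
  "pick_set m z \<longleftrightarrow>
     (\<forall>w. (\<forall>i<m. cmod (w i) < 1) \<and> pick_psd m z w \<longrightarrow>
        (\<exists>\<phi>. schur \<phi> \<and> (\<forall>i<m. \<phi> (z i) = w i)))"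

end

theory Submission
  imports Defs "Jordan_Normal_Form.Determinant"
begin

text \<open>The Szego kernels \<open>k i = S(\<cdot>, z i)\<close> at distinct points are linearly independent, so
  \<open>Q\<^sub>Z\<close> is \<open>m\<close>-dimensional and every \<open>f \<in> Q\<^sub>Z\<close> is determined by its values \<open>f (z i)\<close>.
  By the reproducing property \<open>\<langle>g, k i\<rangle> = g (z i)\<close>, the compression of \<open>T\<^sub>\<phi>\<close> to \<open>Q\<^sub>Z\<close>
  is the diagonal operator \<open>f \<mapsto> (\<phi> (z i) f (z i))\<^sub>i\<close>; in particular so are the compressed shifts.
  Since the points are separated by their coordinates, an operator commuting with all
  compressed shifts is diagonal too, with some values \<open>w i\<close>. A diagonal operator is a
  contraction iff its adjoint \<open>k i \<mapsto> cnj (w i) k i\<close> is, and the Pick form at \<open>v\<close> is exactly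
  \<open>\<parallel>\<Sum> v i k i\<parallel>\<^sup>2 - \<parallel>\<Sum> cnj (w i) v i k i\<parallel>\<^sup>2\<close>. Hence commutant lifting for \<open>Q\<^sub>Z\<close> says precisely
  that data with a positive semidefinite Pick matrix are interpolated by a Schur function.\<close>

text \<open>Jordan_Normal_Form's \<open>vec_index\<close> and HOL-Algebra's \<open>mon\<close> clash with \<open>vec_nth\<close> and \<open>Defs.mon\<close>.\<close>
no_notation vec_index (infixl \<open>$\<close> 100)
hide_const (open) Group.mon

section \<open>Power series in several variables\<close>

lemma has_sum_sum:
  fixes f :: "'i \<Rightarrow> 'a \<Rightarrow> 'b::topological_comm_monoid_add"
  assumes "finite I" "\<And>i. i \<in> I \<Longrightarrow> (f i has_sum s i) A"
  shows "((\<lambda>x. \<Sum>i\<in>I. f i x) has_sum (\<Sum>i\<in>I. s i)) A"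
  using assms by (induction I rule: finite_induct) (auto intro: has_sum_add)

lemma has_sum_diff:
  fixes f g :: "'a \<Rightarrow> 'b::topological_ab_group_add"
  assumes "(f has_sum a) A" "(g has_sum b) A"
  shows "((\<lambda>x. f x - g x) has_sum (a - b)) A"
  using has_sum_add[OF assms(1), of "\<lambda>x. - g x" "- b"] assms(2) by (simp add: has_sum_uminus)

lemma has_sum_mon:
  assumes "\<And>k. norm (u $ k) < 1"
  shows "(mon u has_sum (\<Prod>k\<in>UNIV. inverse (1 - u $ k))) UNIV"
proof -
  have geometric: "((\<lambda>j. (u $ k) ^ j) has_sum inverse (1 - u $ k)) UNIV"
    and abs_geometric: "(\<lambda>j. norm ((u $ k) ^ j)) summable_on UNIV" for k
  proof -
    have summable: "summable (\<lambda>j. norm ((u $ k) ^ j))"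
      using assms by (simp add: norm_power summable_geometric)
    then show "(\<lambda>j. norm ((u $ k) ^ j)) summable_on UNIV"
      by (simp add: norm_summable_imp_summable_on)
    show "((\<lambda>j. (u $ k) ^ j) has_sum inverse (1 - u $ k)) UNIV"
      using norm_summable_imp_has_sum[OF summable geometric_sums[OF assms]]
      by (simp add: field_simps)
  qed
  have mon: "mon u = (\<lambda>\<alpha>. \<Prod>k\<in>UNIV. (u $ k) ^ \<alpha> k)"
    by (simp add: Defs.mon_def fun_eq_iff)
  have "Infinite_Set_Sum.abs_summable_on (\<lambda>\<alpha>. \<Prod>k\<in>UNIV. (u $ k) ^ \<alpha> k) (PiE UNIV (\<lambda>_. UNIV))"
  proof (rule abs_summable_on_prod_PiE)
    show "Infinite_Set_Sum.abs_summable_on (\<lambda>j. (u $ k) ^ j) UNIV" for k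
      using abs_geometric[of k] abs_summable_equivalent[of "\<lambda>j. (u $ k) ^ j"] by simp
  qed auto
  then have summable: "mon u summable_on UNIV"
    using abs_summable_equivalent abs_summable_summable by (fastforce simp: mon)
  have "infsum (\<lambda>\<alpha>. \<Prod>k\<in>UNIV. (u $ k) ^ \<alpha> k) (PiE UNIV (\<lambda>_. UNIV))
      = (\<Prod>k\<in>UNIV. infsum (\<lambda>j. (u $ k) ^ j) UNIV)"
    by (rule infsum_prod_PiE_abs) (use abs_geometric in auto)
  also have "\<dots> = (\<Prod>k\<in>UNIV. inverse (1 - u $ k))"
    using geometric by (intro prod.cong refl infsumI)
  finally have "infsum (mon u) UNIV = (\<Prod>k\<in>UNIV. inverse (1 - u $ k))"
    by (simp only: mon PiE_UNIV)
  with summable show ?thesis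
    by (metis has_sum_infsum)
qed

lemma finite_multiindices_le: "finite {\<beta>::'n::finite \<Rightarrow> nat. \<forall>k. \<beta> k \<le> \<alpha> k}"
  by (rule finite_subset[of _ "PiE UNIV (\<lambda>k. {..\<alpha> k})"]) (auto intro: finite_PiE)

lemma has_sum_Cauchy_product_multiindex:
  fixes A B :: "('n::finite \<Rightarrow> nat) \<Rightarrow> complex"
  assumes A: "(A has_sum a) UNIV" and B: "(B has_sum b) UNIV"
  shows "((\<lambda>\<alpha>. \<Sum>\<beta>\<in>{\<beta>. \<forall>k. \<beta> k \<le> \<alpha> k}. A \<beta> * B (\<lambda>k. \<alpha> k - \<beta> k)) has_sum (a * b)) UNIV"
proof -
  define P where "P = (\<lambda>(\<beta>::'n \<Rightarrow> nat, \<gamma>::'n \<Rightarrow> nat). A \<beta> * B \<gamma>)"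
  have norm_A: "(\<lambda>\<beta>. norm (A \<beta>)) summable_on UNIV" and norm_B: "(\<lambda>\<beta>. norm (B \<beta>)) summable_on UNIV"
    using A B summable_on_iff_abs_summable_on_complex summable_on_def by blast+
  have "(\<lambda>x. norm (P x)) summable_on UNIV \<times> UNIV"
  proof (rule Infinite_Sum.abs_summable_on_Sigma_iff[THEN iffD2], intro conjI ballI)
    show "(\<lambda>\<gamma>. norm (P (\<beta>, \<gamma>))) summable_on UNIV" for \<beta>
      unfolding P_def using norm_B by (simp add: norm_mult summable_on_cmult_right)
    have "norm (infsum (\<lambda>\<gamma>. norm (P (\<beta>, \<gamma>))) UNIV) = norm (A \<beta>) * infsum (\<lambda>\<gamma>. norm (B \<gamma>)) UNIV" for \<beta>
      unfolding P_def by (simp add: norm_mult infsum_cmult_right' infsum_nonneg)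
    then show "(\<lambda>\<beta>. norm (infsum (\<lambda>\<gamma>. norm (P (\<beta>, \<gamma>))) UNIV)) summable_on UNIV"
      using summable_on_cmult_left[OF norm_A] by simp
  qed
  then have P_summable: "P summable_on UNIV \<times> UNIV"
    using abs_summable_summable by blast
  have "infsum P (UNIV \<times> UNIV) = infsum (\<lambda>\<beta>. infsum (\<lambda>\<gamma>. P (\<beta>, \<gamma>)) UNIV) UNIV"
    using infsum_Sigma'_banach[of "\<lambda>\<beta> \<gamma>. P (\<beta>, \<gamma>)"] P_summable by simp
  also have "\<dots> = infsum (\<lambda>\<beta>. A \<beta> * b) UNIV"
    unfolding P_def using B by (simp add: infsum_cmult_right' infsumI)
  also have "\<dots> = a * b"
    using A by (simp add: infsum_cmult_left' infsumI)
  finally have "(P has_sum a * b) (UNIV \<times> UNIV)"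
    using P_summable by (metis has_sum_infsum)
  moreover have "((\<lambda>(\<alpha>, \<beta>). A \<beta> * B (\<lambda>k. \<alpha> k - \<beta> k)) has_sum a * b) (SIGMA \<alpha>:UNIV. {\<beta>. \<forall>k. \<beta> k \<le> \<alpha> k})
      \<longleftrightarrow> (P has_sum a * b) (UNIV \<times> UNIV)"
    by (rule has_sum_reindex_bij_witness[where j = "\<lambda>(\<alpha>, \<beta>). (\<beta>, \<lambda>k. \<alpha> k - \<beta> k)"
          and i = "\<lambda>(\<beta>, \<gamma>). (\<lambda>k. \<beta> k + \<gamma> k, \<beta>)"]) (auto simp: P_def fun_eq_iff)
  ultimately show ?thesis
    by (auto intro: has_sum_Sigma' simp: finite_multiindices_le)
qed

lemma mon_add: "mon u (\<lambda>k. \<beta> k + \<gamma> k) = mon u \<beta> * mon u \<gamma>"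
  by (simp add: Defs.mon_def power_add prod.distrib)

lemma has_sum_toep:
  assumes "((\<lambda>\<beta>. c \<beta> * mon u \<beta>) has_sum p) UNIV" and "((\<lambda>\<gamma>. f \<gamma> * mon u \<gamma>) has_sum q) UNIV"
  shows "((\<lambda>\<alpha>. toep c f \<alpha> * mon u \<alpha>) has_sum (p * q)) UNIV"
proof -
  have "mon u \<alpha> = mon u \<beta> * mon u (\<lambda>k. \<alpha> k - \<beta> k)" if "\<forall>k. \<beta> k \<le> \<alpha> k" for \<alpha> \<beta>
    using mon_add[of u \<beta> "\<lambda>k. \<alpha> k - \<beta> k"] that by simp
  then have "toep c f \<alpha> * mon u \<alpha> = (\<Sum>\<beta>\<in>{\<beta>. \<forall>k. \<beta> k \<le> \<alpha> k}.
      (c \<beta> * mon u \<beta>) * (f (\<lambda>k. \<alpha> k - \<beta> k) * mon u (\<lambda>k. \<alpha> k - \<beta> k)))" for \<alpha>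
    unfolding toep_def sum_distrib_right by (intro sum.cong) auto
  then show ?thesis
    using has_sum_Cauchy_product_multiindex[OF assms] by simp
qed

lemma pw_series_coordinate:
  fixes k :: "'n::finite"
  shows "pw_series (zcoef k) (\<lambda>u. u $ k)"
proof -
  define \<epsilon> where "\<epsilon> = (\<lambda>j::'n. if j = k then 1 else (0::nat))"
  have "mon u \<epsilon> = u $ k" for u :: "complex ^ 'n"
    by (simp add: Defs.mon_def \<epsilon>_def if_distrib prod.If_cases)
  then show ?thesis
    unfolding pw_series_def
    by (intro ballI has_sum_finite_neutralI[of "{\<epsilon>}"]) (auto simp: zcoef_def \<epsilon>_def)
qed

lemma pw_series_const: "pw_series (\<lambda>\<alpha>. if \<alpha> = (\<lambda>_. 0) then c else 0) (\<lambda>_. c)"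
  unfolding pw_series_def
  by (intro ballI has_sum_finite_neutralI[of "{\<lambda>_. 0}"]) (auto simp: Defs.mon_def)

section \<open>Szego kernels\<close>

lemma norm_mult_less_one:
  fixes x y :: "'a::real_normed_div_algebra"
  assumes "norm x < 1" "norm y < 1"
  shows "norm (x * y) < 1"
  using assms
  by (simp add: norm_mult) (metis mult_left_le_one_le norm_ge_zero order.strict_trans1 less_imp_le)

lemma polydiscD: "u \<in> polydisc \<Longrightarrow> norm (u $ k) < 1"
  by (simp add: polydisc_def)

lemma has_sum_szego:
  fixes u w :: "complex ^ 'n"
  assumes "w \<in> polydisc" "u \<in> polydisc"
  shows "((\<lambda>\<alpha>. szego w \<alpha> * mon u \<alpha>) has_sum szego_kernel u w) UNIV"
proof -
  define v :: "complex ^ 'n" where "v = (\<chi> k. cnj (w $ k) * u $ k)"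
  have "norm (v $ k) < 1" for k
    using assms by (simp add: v_def norm_mult_less_one polydiscD)
  moreover have "szego w \<alpha> * mon u \<alpha> = mon v \<alpha>" for \<alpha>
    by (simp add: szego_def Defs.mon_def v_def power_mult_distrib prod.distrib)
  moreover have "(\<Prod>k\<in>UNIV. inverse (1 - v $ k)) = szego_kernel u w"
    by (simp add: szego_kernel_def v_def mult.commute)
  ultimately show ?thesis
    using has_sum_mon[of v] by simp
qed

lemma cnj_szego: "cnj (szego w \<alpha>) = mon w \<alpha>"
  by (simp add: szego_def Defs.mon_def)

lemma szego_zero [simp]: "szego w (\<lambda>_. 0) = 1"
  by (simp add: szego_def)

lemma szego_shift: "szego w (\<alpha>(k := Suc (\<alpha> k))) = cnj (w $ k) * szego w \<alpha>"
proof -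
  have "szego w (\<alpha>(k := Suc (\<alpha> k)))
      = (\<Prod>l\<in>UNIV. cnj (w $ l) ^ \<alpha> l * (if l = k then cnj (w $ l) else 1))"
    unfolding szego_def by (intro prod.cong) auto
  then show ?thesis
    by (simp add: prod.distrib szego_def)
qed

lemma cnj_szego_kernel: "cnj (szego_kernel u w) = szego_kernel w u"
  by (simp add: szego_kernel_def mult.commute)

lemma szego_kernel_nonzero:
  assumes "u \<in> polydisc" "w \<in> polydisc"
  shows "szego_kernel u w \<noteq> 0"
proof -
  have "norm (u $ k * cnj (w $ k)) < 1" for k
    using assms by (simp add: norm_mult_less_one polydiscD)
  then have "u $ k * cnj (w $ k) \<noteq> 1" for k
    by (metis norm_one order.irrefl)
  then show ?thesis
    by (simp add: szego_kernel_def)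
qed

lemma szego_kernel_diagonal:
  assumes "u \<in> polydisc"
  obtains r where "r > 0" "szego_kernel u u = of_real r"
proof
  show "(\<Prod>k\<in>UNIV. inverse (1 - (cmod (u $ k))\<^sup>2)) > 0"
    using polydiscD[OF assms] by (intro prod_pos) (simp add: abs_square_less_1)
  show "szego_kernel u u = of_real (\<Prod>k\<in>UNIV. inverse (1 - (cmod (u $ k))\<^sup>2))"
    by (simp add: szego_kernel_def flip: complex_norm_square)
qed

lemma szego_relation_mult_coordinate:
  assumes "\<And>\<alpha>. (\<Sum>j<m. b j * szego (z j) \<alpha>) = 0"
  shows "(\<Sum>j<m. b j * (cnj (z j $ k) - c) * szego (z j) \<alpha>) = 0"
proof -
  have "(\<Sum>j<m. b j * (cnj (z j $ k) - c) * szego (z j) \<alpha>) =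
        (\<Sum>j<m. b j * szego (z j) (\<alpha>(k := Suc (\<alpha> k)))) - c * (\<Sum>j<m. b j * szego (z j) \<alpha>)"
    by (simp add: szego_shift sum_distrib_left algebra_simps flip: sum_subtractf)
  then show ?thesis
    using assms by simp
qed

text \<open>Szego kernels at distinct points are linearly independent: multiplying a vanishing
  combination by coordinate factors that separate the other points from \<open>z i\<close> and reading off the
  constant coefficient isolates \<open>a i\<close>.\<close>
lemma szego_kernels_independent:
  fixes m :: nat
  assumes inj: "inj_on z {..<m}" and zero: "\<And>\<alpha>. (\<Sum>j<m. a j * szego (z j) \<alpha>) = 0" and "i < m"
  shows "a i = 0"
proof -
  have "\<exists>k. z l $ k \<noteq> z i $ k" if "l \<in> {..<m} - {i}" for l
  proof -
    have "z l \<noteq> z i"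
      using inj_onD[OF inj, of l i] that \<open>i < m\<close> by auto
    then show ?thesis
      by (simp add: Finite_Cartesian_Product.vec_eq_iff)
  qed
  then obtain sep where sep: "\<And>l. l \<in> {..<m} - {i} \<Longrightarrow> z l $ sep l \<noteq> z i $ sep l"
    by metis
  define P where "P L j = (\<Prod>l\<in>L. cnj (z j $ sep l) - cnj (z l $ sep l))" for L j
  have relation: "(\<Sum>j<m. a j * P L j * szego (z j) \<alpha>) = 0" if "finite L" for L \<alpha>
    using that
  proof (induction L arbitrary: \<alpha> rule: finite_induct)
    case empty
    then show ?case
      using zero by (simp add: P_def)
  next
    case (insert l L)
    then show ?case
      using szego_relation_mult_coordinate[of "\<lambda>j. a j * P L j", OF insert.IH]
      by (simp add: P_def mult_ac)
  qed
  from relation[of "{..<m} - {i}" "\<lambda>_. 0"] have "(\<Sum>j<m. a j * P ({..<m} - {i}) j) = 0"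
    by simp
  moreover have "P ({..<m} - {i}) j = 0" if "j \<in> {..<m} - {i}" for j
    using that by (auto simp: P_def)
  ultimately have "a i * P ({..<m} - {i}) i = 0"
    using \<open>i < m\<close> by (simp add: sum.remove)
  moreover have "P ({..<m} - {i}) i \<noteq> 0"
    using sep by (force simp: P_def)
  ultimately show ?thesis
    by simp
qed

section \<open>Square linear systems and positive semidefinite forms\<close>

lemma square_system_solvable:
  fixes K :: "nat \<Rightarrow> nat \<Rightarrow> 'a::field"
  assumes inj: "\<And>a j. (\<And>i. i < m \<Longrightarrow> (\<Sum>j<m. K i j * a j) = 0) \<Longrightarrow> j < m \<Longrightarrow> a j = 0"
  shows "\<exists>a. \<forall>i<m. (\<Sum>j<m. K i j * a j) = b i"
proof -
  define A where "A = mat m m (\<lambda>(i, j). K i j)"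
  have A: "A \<in> carrier_mat m m"
    by (simp add: A_def)
  have A_mult: "vec_index (A *\<^sub>v v) i = (\<Sum>j<m. K i j * vec_index v j)"
    if "i < m" "v \<in> carrier_vec m" for v i
    using that by (auto simp: A_def scalar_prod_def lessThan_atLeast0 intro!: sum.cong)
  have "Determinant.det A \<noteq> 0"
  proof
    assume "Determinant.det A = 0"
    then obtain v where v: "v \<in> carrier_vec m" "v \<noteq> 0\<^sub>v m" "A *\<^sub>v v = 0\<^sub>v m"
      using det_0_iff_vec_prod_zero[OF A] by blast
    have "vec_index v j = 0" if "j < m" for j
      using inj[of "vec_index v" j] that v A_mult[of _ v] by (metis index_zero_vec(1))
    with v show False
      by auto
  qed
  then obtain B where B: "B \<in> carrier_mat m m" "A * B = 1\<^sub>m m"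
    using det_non_zero_imp_unit[OF A] by (auto simp: Units_def ring_mat_def)
  define x where "x = B *\<^sub>v vec m b"
  have x: "x \<in> carrier_vec m"
    using B by (simp add: x_def)
  have "A *\<^sub>v x = vec m b"
    using A B by (simp add: x_def flip: assoc_mult_mat_vec)
  then have "\<forall>i<m. (\<Sum>j<m. K i j * vec_index x j) = b i"
    using A_mult[OF _ x] by simp
  then show ?thesis
    by blast
qed

lemma quadratic_form_restrict:
  fixes P :: "nat \<Rightarrow> nat \<Rightarrow> complex"
  assumes "S \<subseteq> {..<m}" and "\<And>i. i < m \<Longrightarrow> i \<notin> S \<Longrightarrow> v i = 0"
  shows "(\<Sum>i<m. \<Sum>j<m. cnj (v i) * P i j * v j) = (\<Sum>i\<in>S. \<Sum>j\<in>S. cnj (v i) * P i j * v j)"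
proof -
  have "(\<Sum>i<m. \<Sum>j<m. cnj (v i) * P i j * v j) = (\<Sum>i\<in>S. \<Sum>j<m. cnj (v i) * P i j * v j)"
    by (rule sum.mono_neutral_right) (use assms in auto)
  also have "\<dots> = (\<Sum>i\<in>S. \<Sum>j\<in>S. cnj (v i) * P i j * v j)"
    by (intro sum.cong refl sum.mono_neutral_right) (use assms in auto)
  finally show ?thesis .
qed

lemma psd_diagonal_nonneg:
  fixes P :: "nat \<Rightarrow> nat \<Rightarrow> complex"
  assumes psd: "\<And>v. Re (\<Sum>i<m. \<Sum>j<m. cnj (v i) * P i j * v j) \<ge> 0" and "a < m"
  shows "Re (P a a) \<ge> 0"
proof -
  have "(\<Sum>i<m. \<Sum>j<m. cnj (if i = a then 1 else 0) * P i j * (if j = a then 1 else 0)) = P a a"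
    using quadratic_form_restrict[of "{a}" m "\<lambda>l. if l = a then 1 else 0" P] \<open>a < m\<close> by simp
  then show ?thesis
    using psd[of "\<lambda>l. if l = a then 1 else 0"] by simp
qed

lemma psd_zero_diagonal_imp_zero_entry:
  fixes P :: "nat \<Rightarrow> nat \<Rightarrow> complex"
  assumes psd: "\<And>v. Re (\<Sum>i<m. \<Sum>j<m. cnj (v i) * P i j * v j) \<ge> 0"
    and "P b a = cnj (P a b)" and "a < m" "b < m" "a \<noteq> b" and "P a a = 0"
  shows "P a b = 0"
proof (rule ccontr)
  define p where "p = P a b"
  assume "P a b \<noteq> 0"
  then have "(cmod p)\<^sup>2 > 0"
    by (simp add: p_def)
  define s where "s = (Re (P b b) + 1) / (2 * (cmod p)\<^sup>2)"
  define v where "v l = (if l = a then - of_real s * p else if l = b then 1 else 0)" for l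
  have "(\<Sum>i<m. \<Sum>j<m. cnj (v i) * P i j * v j) = - 2 * of_real s * (p * cnj p) + P b b"
    using quadratic_form_restrict[of "{a, b}" m v P] assms
    by (simp add: v_def p_def algebra_simps)
  then have "Re (\<Sum>i<m. \<Sum>j<m. cnj (v i) * P i j * v j) = - 2 * (s * (cmod p)\<^sup>2) + Re (P b b)"
    by (simp flip: complex_norm_square)
  also have "\<dots> = -1"
    using \<open>(cmod p)\<^sup>2 > 0\<close> by (simp add: s_def field_simps)
  finally show False
    using psd[of v] by simp
qed

section \<open>The span of finitely many Szego kernels\<close>

lemma contraction_onD:
  assumes "contraction_on Q X"
  shows "f \<in> Q \<Longrightarrow> X f \<in> Q"
    and "f \<in> Q \<Longrightarrow> g \<in> Q \<Longrightarrow> X (\<lambda>\<alpha>. f \<alpha> + g \<alpha>) = (\<lambda>\<alpha>. X f \<alpha> + X g \<alpha>)"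
    and "f \<in> Q \<Longrightarrow> X (\<lambda>\<alpha>. c * f \<alpha>) = (\<lambda>\<alpha>. c * X f \<alpha>)"
    and "f \<in> Q \<Longrightarrow> h2_norm (X f) \<le> h2_norm f"
  using assms unfolding contraction_on_def by blast+

definition eval_series :: "'n coeffs \<Rightarrow> complex ^ 'n \<Rightarrow> complex" where
  "eval_series f u = infsum (\<lambda>\<alpha>. f \<alpha> * mon u \<alpha>) UNIV"

locale distinct_polydisc_points =
  fixes m :: nat and z :: "nat \<Rightarrow> complex ^ 'n::finite"
  assumes z_in_polydisc: "\<And>i. i < m \<Longrightarrow> z i \<in> polydisc"
    and z_inj: "inj_on z {..<m}"
begin

definition kernel_comb :: "(nat \<Rightarrow> complex) \<Rightarrow> 'n coeffs" where
  "kernel_comb a = (\<lambda>\<alpha>. \<Sum>j<m. a j * szego (z j) \<alpha>)"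

definition gram :: "nat \<Rightarrow> nat \<Rightarrow> complex" where
  "gram i j = szego_kernel (z i) (z j)"

definition gram_form :: "(nat \<Rightarrow> complex) \<Rightarrow> (nat \<Rightarrow> complex) \<Rightarrow> complex" where
  "gram_form a b = (\<Sum>i<m. cnj (b i) * (\<Sum>j<m. gram i j * a j))"

lemma QZ_eq_range: "QZ m z = range kernel_comb"
  by (auto simp: QZ_def kernel_comb_def)

lemma has_sum_kernel_comb:
  assumes "i < m"
  shows "((\<lambda>\<alpha>. kernel_comb a \<alpha> * mon (z i) \<alpha>) has_sum (\<Sum>j<m. gram i j * a j)) UNIV"
proof -
  have "((\<lambda>\<alpha>. \<Sum>j<m. a j * (szego (z j) \<alpha> * mon (z i) \<alpha>)) has_sum (\<Sum>j<m. a j * gram i j)) UNIV"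
    unfolding gram_def
    by (intro has_sum_sum has_sum_cmult_right has_sum_szego z_in_polydisc assms) auto
  moreover have "kernel_comb a \<alpha> * mon (z i) \<alpha> = (\<Sum>j<m. a j * (szego (z j) \<alpha> * mon (z i) \<alpha>))" for \<alpha>
    by (simp add: kernel_comb_def sum_distrib_right mult.assoc)
  ultimately show ?thesis
    by (simp add: mult.commute)
qed

lemma eval_kernel_comb: "i < m \<Longrightarrow> eval_series (kernel_comb a) (z i) = (\<Sum>j<m. gram i j * a j)"
  unfolding eval_series_def by (rule infsumI) (rule has_sum_kernel_comb)

lemma has_sum_eval_QZ:
  "f \<in> QZ m z \<Longrightarrow> i < m \<Longrightarrow> ((\<lambda>\<alpha>. f \<alpha> * mon (z i) \<alpha>) has_sum eval_series f (z i)) UNIV"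
  by (auto simp: QZ_eq_range eval_kernel_comb intro: has_sum_kernel_comb)

text \<open>The reproducing property: \<open>\<langle>g, S(\<cdot>, z i)\<rangle> = g (z i)\<close>.\<close>
lemma has_sum_inner_kernel_comb:
  assumes "\<And>i. i < m \<Longrightarrow> ((\<lambda>\<alpha>. g \<alpha> * mon (z i) \<alpha>) has_sum e i) UNIV"
  shows "((\<lambda>\<alpha>. g \<alpha> * cnj (kernel_comb b \<alpha>)) has_sum (\<Sum>i<m. cnj (b i) * e i)) UNIV"
proof -
  have "((\<lambda>\<alpha>. \<Sum>i<m. cnj (b i) * (g \<alpha> * mon (z i) \<alpha>)) has_sum (\<Sum>i<m. cnj (b i) * e i)) UNIV"
    by (intro has_sum_sum has_sum_cmult_right assms) auto
  then show ?thesis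
    by (simp add: kernel_comb_def sum_distrib_left cnj_szego mult_ac)
qed

lemma has_sum_gram_form:
  "((\<lambda>\<alpha>. kernel_comb a \<alpha> * cnj (kernel_comb b \<alpha>)) has_sum gram_form a b) UNIV"
  unfolding gram_form_def by (intro has_sum_inner_kernel_comb has_sum_kernel_comb)

lemma has_sum_norm_kernel_comb:
  "((\<lambda>\<alpha>. (norm (kernel_comb a \<alpha>))\<^sup>2) has_sum Re (gram_form a a)) UNIV"
  and Im_gram_form_self: "Im (gram_form a a) = 0"
proof -
  have "kernel_comb a \<alpha> * cnj (kernel_comb a \<alpha>) = of_real ((norm (kernel_comb a \<alpha>))\<^sup>2)" for \<alpha>
    by (rule complex_norm_square[symmetric])
  with has_sum_gram_form[of a a]
  have sum: "((\<lambda>\<alpha>. complex_of_real ((norm (kernel_comb a \<alpha>))\<^sup>2)) has_sum gram_form a a) UNIV"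
    by simp
  from has_sum_Re[OF sum] show "((\<lambda>\<alpha>. (norm (kernel_comb a \<alpha>))\<^sup>2) has_sum Re (gram_form a a)) UNIV"
    by simp
  from has_sum_Im[OF sum] have "((\<lambda>_::'n \<Rightarrow> nat. 0::real) has_sum Im (gram_form a a)) UNIV"
    by simp
  then show "Im (gram_form a a) = 0"
    using has_sum_0_simp has_sum_unique by blast
qed

lemma Re_gram_form_self_nonneg: "Re (gram_form a a) \<ge> 0"
  by (rule has_sum_nonneg[OF has_sum_norm_kernel_comb]) simp

lemma h2_norm_kernel_comb: "h2_norm (kernel_comb a) = sqrt (Re (gram_form a a))"
  unfolding h2_norm_def using has_sum_norm_kernel_comb by (simp add: infsumI)

lemma kernel_comb_eq_0_if_gram_form_eq_0:
  assumes "gram_form a a = 0"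
  shows "kernel_comb a \<alpha> = 0"
proof -
  have "(norm (kernel_comb a \<alpha>))\<^sup>2 = 0"
    by (rule nonneg_has_sum_le_0D[OF has_sum_norm_kernel_comb]) (simp_all add: assms)
  then show ?thesis
    by simp
qed

lemma gram_form_swap: "gram_form b a = cnj (gram_form a b)"
proof -
  have "gram_form b a = (\<Sum>i<m. \<Sum>j<m. cnj (a i) * gram i j * b j)"
    by (simp add: gram_form_def sum_distrib_left mult.assoc)
  also have "\<dots> = (\<Sum>j<m. \<Sum>i<m. cnj (a i) * gram i j * b j)"
    by (rule sum.swap)
  also have "\<dots> = cnj (gram_form a b)"
    by (simp add: gram_form_def gram_def sum_distrib_left cnj_szego_kernel mult_ac)
  finally show ?thesis .
qed

lemma Re_gram_form_diff:
  "Re (gram_form (\<lambda>j. a j - b j) (\<lambda>j. a j - b j))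
     = Re (gram_form a a) - 2 * Re (gram_form a b) + Re (gram_form b b)"
proof -
  have "gram_form (\<lambda>j. a j - b j) (\<lambda>j. a j - b j)
      = gram_form a a - gram_form a b - (gram_form b a - gram_form b b)"
    by (simp add: gram_form_def sum_subtractf right_diff_distrib left_diff_distrib)
  moreover have "Re (gram_form b a) = Re (gram_form a b)"
    using gram_form_swap[of b a] by simp
  ultimately show ?thesis
    by simp
qed

lemma gram_injective:
  assumes "\<And>i. i < m \<Longrightarrow> (\<Sum>j<m. gram i j * a j) = 0" and "j < m"
  shows "a j = 0"
proof (rule szego_kernels_independent[OF z_inj _ \<open>j < m\<close>])
  have "gram_form a a = 0"
    using assms by (simp add: gram_form_def)
  then show "(\<Sum>j<m. a j * szego (z j) \<alpha>) = 0" for \<alpha>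
    using kernel_comb_eq_0_if_gram_form_eq_0 by (simp add: kernel_comb_def)
qed

lemma interpolant_ex1: "\<exists>!q. q \<in> QZ m z \<and> (\<forall>i<m. eval_series q (z i) = b i)"
proof -
  have "\<exists>a. \<forall>i<m. (\<Sum>j<m. gram i j * a j) = b i"
    by (rule square_system_solvable) (rule gram_injective)
  then obtain a where a: "\<forall>i<m. (\<Sum>j<m. gram i j * a j) = b i"
    by blast
  show ?thesis
  proof (rule ex1I)
    show "kernel_comb a \<in> QZ m z \<and> (\<forall>i<m. eval_series (kernel_comb a) (z i) = b i)"
      using a by (simp add: QZ_eq_range eval_kernel_comb)
  next
    fix q
    assume q: "q \<in> QZ m z \<and> (\<forall>i<m. eval_series q (z i) = b i)"
    then obtain c where c: "q = kernel_comb c"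
      by (auto simp: QZ_eq_range)
    have "(\<Sum>j<m. gram i j * (c j - a j)) = 0" if "i < m" for i
      using q a that by (simp add: c eval_kernel_comb right_diff_distrib sum_subtractf)
    then have "c j = a j" if "j < m" for j
      using gram_injective[of "\<lambda>j. c j - a j"] that by simp
    then show "q = kernel_comb a"
      by (simp add: c kernel_comb_def)
  qed
qed

definition interpolant :: "(nat \<Rightarrow> complex) \<Rightarrow> 'n coeffs" where
  "interpolant b = (THE q. q \<in> QZ m z \<and> (\<forall>i<m. eval_series q (z i) = b i))"

lemma interpolant_in_QZ: "interpolant b \<in> QZ m z"
  and eval_interpolant: "i < m \<Longrightarrow> eval_series (interpolant b) (z i) = b i"
  using theI'[OF interpolant_ex1[of b]] unfolding interpolant_def by auto

lemma interpolant_unique: "q \<in> QZ m z \<Longrightarrow> (\<And>i. i < m \<Longrightarrow> eval_series q (z i) = b i) \<Longrightarrow> q = interpolant b"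
  unfolding interpolant_def by (rule the1_equality[OF interpolant_ex1, symmetric]) auto

lemma interpolant_cong: "(\<And>i. i < m \<Longrightarrow> b i = b' i) \<Longrightarrow> interpolant b = interpolant b'"
  by (rule interpolant_unique[OF interpolant_in_QZ]) (simp add: eval_interpolant)

lemma interpolant_eval: "q \<in> QZ m z \<Longrightarrow> interpolant (\<lambda>i. eval_series q (z i)) = q"
  by (rule interpolant_unique[symmetric]) auto

lemma h2_inner_residual_kernel_comb:
  assumes "\<And>i. i < m \<Longrightarrow> ((\<lambda>\<alpha>. g \<alpha> * mon (z i) \<alpha>) has_sum e i) UNIV"
  shows "h2_inner (\<lambda>\<alpha>. g \<alpha> - kernel_comb a \<alpha>) (kernel_comb b)
      = (\<Sum>i<m. cnj (b i) * (e i - (\<Sum>j<m. gram i j * a j)))"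
  unfolding h2_inner_def
  by (intro infsumI has_sum_inner_kernel_comb)
     (simp add: left_diff_distrib has_sum_diff assms has_sum_kernel_comb)

lemma orthogonal_QZ_iff:
  assumes g: "\<And>i. i < m \<Longrightarrow> ((\<lambda>\<alpha>. g \<alpha> * mon (z i) \<alpha>) has_sum e i) UNIV" and "q \<in> QZ m z"
  shows "(\<forall>k\<in>QZ m z. h2_inner (\<lambda>\<alpha>. g \<alpha> - q \<alpha>) k = 0) \<longleftrightarrow> (\<forall>i<m. eval_series q (z i) = e i)"
proof -
  obtain a where a: "q = kernel_comb a"
    using \<open>q \<in> QZ m z\<close> by (auto simp: QZ_eq_range)
  note inner = h2_inner_residual_kernel_comb[OF g]
  show ?thesis
  proof
    assume orth: "\<forall>k\<in>QZ m z. h2_inner (\<lambda>\<alpha>. g \<alpha> - q \<alpha>) k = 0"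
    show "\<forall>i<m. eval_series q (z i) = e i"
    proof (intro allI impI)
      fix i
      assume "i < m"
      have "(\<Sum>l<m. cnj (if l = i then 1 else 0) * (e l - eval_series q (z l)))
          = (\<Sum>l<m. if l = i then e l - eval_series q (z l) else 0)"
        by (rule sum.cong) auto
      moreover have "h2_inner (\<lambda>\<alpha>. g \<alpha> - q \<alpha>) (kernel_comb (\<lambda>j. if j = i then 1 else 0)) = 0"
        using orth by (simp add: QZ_eq_range)
      ultimately show "eval_series q (z i) = e i"
        using \<open>i < m\<close> by (simp add: a inner eval_kernel_comb)
    qed
  next
    assume "\<forall>i<m. eval_series q (z i) = e i"
    then have "(\<Sum>j<m. gram i j * a j) = e i" if "i < m" for i
      using that by (simp add: a eval_kernel_comb)
    then show "\<forall>k\<in>QZ m z. h2_inner (\<lambda>\<alpha>. g \<alpha> - q \<alpha>) k = 0"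
      by (auto simp: QZ_eq_range a inner)
  qed
qed

lemma proj_QZ:
  assumes "\<And>i. i < m \<Longrightarrow> ((\<lambda>\<alpha>. g \<alpha> * mon (z i) \<alpha>) has_sum e i) UNIV"
  shows "proj (QZ m z) g = interpolant e"
proof -
  have "q \<in> QZ m z \<and> (\<forall>k\<in>QZ m z. h2_inner (\<lambda>\<alpha>. g \<alpha> - q \<alpha>) k = 0) \<longleftrightarrow> q = interpolant e" for q
    using orthogonal_QZ_iff[OF assms] interpolant_in_QZ interpolant_unique eval_interpolant by blast
  then show ?thesis
    unfolding proj_def by simp
qed

lemma proj_toep_QZ:
  assumes "pw_series c \<phi>" and "f \<in> QZ m z"
  shows "proj (QZ m z) (toep c f) = interpolant (\<lambda>i. \<phi> (z i) * eval_series f (z i))"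
proof (rule proj_QZ)
  fix i
  assume "i < m"
  then have "((\<lambda>\<beta>. c \<beta> * mon (z i) \<beta>) has_sum \<phi> (z i)) UNIV"
    using assms(1) z_in_polydisc unfolding pw_series_def by blast
  then show "((\<lambda>\<alpha>. toep c f \<alpha> * mon (z i) \<alpha>) has_sum \<phi> (z i) * eval_series f (z i)) UNIV"
    using has_sum_toep has_sum_eval_QZ[OF assms(2) \<open>i < m\<close>] by blast
qed

lemma compr_QZ: "f \<in> QZ m z \<Longrightarrow> compr (QZ m z) k f = interpolant (\<lambda>i. z i $ k * eval_series f (z i))"
  unfolding compr_def using proj_toep_QZ[OF pw_series_coordinate] by simp

lemma QZ_add:
  assumes "f \<in> QZ m z" "g \<in> QZ m z"
  shows "(\<lambda>\<alpha>. f \<alpha> + g \<alpha>) \<in> QZ m z"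
proof -
  obtain a b where "f = kernel_comb a" "g = kernel_comb b"
    using assms by (auto simp: QZ_eq_range)
  then have "(\<lambda>\<alpha>. f \<alpha> + g \<alpha>) = kernel_comb (\<lambda>j. a j + b j)"
    by (simp add: kernel_comb_def sum.distrib distrib_right)
  then show ?thesis
    by (simp add: QZ_eq_range)
qed

lemma QZ_smult:
  assumes "f \<in> QZ m z"
  shows "(\<lambda>\<alpha>. c * f \<alpha>) \<in> QZ m z"
proof -
  obtain a where "f = kernel_comb a"
    using assms by (auto simp: QZ_eq_range)
  then have "(\<lambda>\<alpha>. c * f \<alpha>) = kernel_comb (\<lambda>j. c * a j)"
    by (simp add: kernel_comb_def sum_distrib_left mult.assoc)
  then show ?thesis
    by (simp add: QZ_eq_range)
qed

lemma QZ_sum: "finite L \<Longrightarrow> (\<And>l. l \<in> L \<Longrightarrow> g l \<in> QZ m z) \<Longrightarrow> (\<lambda>\<alpha>. \<Sum>l\<in>L. c l * g l \<alpha>) \<in> QZ m z"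
proof (induction L rule: finite_induct)
  case empty
  have "(\<lambda>_. 0) = kernel_comb (\<lambda>_. 0)"
    by (simp add: kernel_comb_def)
  then show ?case
    by (simp add: QZ_eq_range)
next
  case (insert l L)
  then show ?case
    by (simp add: QZ_add QZ_smult)
qed

lemma eval_add_QZ:
  "f \<in> QZ m z \<Longrightarrow> g \<in> QZ m z \<Longrightarrow> i < m \<Longrightarrow>
    eval_series (\<lambda>\<alpha>. f \<alpha> + g \<alpha>) (z i) = eval_series f (z i) + eval_series g (z i)"
  unfolding eval_series_def
  by (rule infsumI) (simp add: distrib_right has_sum_add has_sum_eval_QZ[unfolded eval_series_def])

lemma eval_smult_QZ:
  "f \<in> QZ m z \<Longrightarrow> i < m \<Longrightarrow> eval_series (\<lambda>\<alpha>. c * f \<alpha>) (z i) = c * eval_series f (z i)"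
  unfolding eval_series_def
  by (rule infsumI)
     (simp add: mult.assoc has_sum_cmult_right has_sum_eval_QZ[unfolded eval_series_def])

lemma eval_sum_QZ:
  assumes "finite L" "\<And>l. l \<in> L \<Longrightarrow> g l \<in> QZ m z" "i < m"
  shows "eval_series (\<lambda>\<alpha>. \<Sum>l\<in>L. c l * g l \<alpha>) (z i) = (\<Sum>l\<in>L. c l * eval_series (g l) (z i))"
proof -
  have "((\<lambda>\<alpha>. \<Sum>l\<in>L. c l * (g l \<alpha> * mon (z i) \<alpha>)) has_sum (\<Sum>l\<in>L. c l * eval_series (g l) (z i))) UNIV"
    using assms by (intro has_sum_sum has_sum_cmult_right has_sum_eval_QZ) auto
  then show ?thesis
    unfolding eval_series_def by (intro infsumI) (simp add: sum_distrib_right mult.assoc)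
qed

definition lagrange_basis :: "nat \<Rightarrow> 'n coeffs" where
  "lagrange_basis l = interpolant (\<lambda>i. if i = l then 1 else 0)"

lemma lagrange_basis_in_QZ: "lagrange_basis l \<in> QZ m z"
  by (simp add: lagrange_basis_def interpolant_in_QZ)

lemma eval_lagrange_basis: "i < m \<Longrightarrow> eval_series (lagrange_basis l) (z i) = (if i = l then 1 else 0)"
  by (simp add: lagrange_basis_def eval_interpolant)

lemma lagrange_basis_expansion:
  assumes "f \<in> QZ m z"
  shows "(\<lambda>\<alpha>. \<Sum>l<m. eval_series f (z l) * lagrange_basis l \<alpha>) = f"
proof -
  have "(\<lambda>\<alpha>. \<Sum>l<m. eval_series f (z l) * lagrange_basis l \<alpha>) = interpolant (\<lambda>i. eval_series f (z i))"
  proof (rule interpolant_unique)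
    fix i
    assume "i < m"
    then have "(\<Sum>l<m. eval_series f (z l) * (if i = l then 1 else 0)) = eval_series f (z i)"
      by (simp add: if_distrib[of "\<lambda>x. _ * x"] cong: if_cong)
    then show "eval_series (\<lambda>\<alpha>. \<Sum>l<m. eval_series f (z l) * lagrange_basis l \<alpha>) (z i)
        = eval_series f (z i)"
      using \<open>i < m\<close> by (simp add: eval_sum_QZ lagrange_basis_in_QZ eval_lagrange_basis)
  qed (simp add: QZ_sum lagrange_basis_in_QZ)
  then show ?thesis
    using interpolant_eval[OF assms] by simp
qed

lemma compr_lagrange_basis:
  "compr (QZ m z) k (lagrange_basis l) = (\<lambda>\<alpha>. z l $ k * lagrange_basis l \<alpha>)"
  unfolding compr_QZ[OF lagrange_basis_in_QZ]
  by (rule interpolant_unique[symmetric])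
     (auto simp: lagrange_basis_in_QZ QZ_smult eval_smult_QZ eval_lagrange_basis)

lemma contraction_on_sum:
  assumes X: "contraction_on (QZ m z) X"
  shows "finite L \<Longrightarrow> (\<And>l. l \<in> L \<Longrightarrow> g l \<in> QZ m z) \<Longrightarrow>
    X (\<lambda>\<alpha>. \<Sum>l\<in>L. c l * g l \<alpha>) = (\<lambda>\<alpha>. \<Sum>l\<in>L. c l * X (g l) \<alpha>)"
proof (induction L rule: finite_induct)
  case empty
  show ?case
    using contraction_onD(3)[OF X lagrange_basis_in_QZ, of 0 0] by simp
next
  case (insert l L)
  have "X (\<lambda>\<alpha>. c l * g l \<alpha> + (\<Sum>l\<in>L. c l * g l \<alpha>))
      = (\<lambda>\<alpha>. X (\<lambda>\<alpha>. c l * g l \<alpha>) \<alpha> + X (\<lambda>\<alpha>. \<Sum>l\<in>L. c l * g l \<alpha>) \<alpha>)"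
    using insert by (intro contraction_onD(2)[OF X] QZ_smult QZ_sum) auto
  also have "X (\<lambda>\<alpha>. c l * g l \<alpha>) = (\<lambda>\<alpha>. c l * X (g l) \<alpha>)"
    using insert.prems by (intro contraction_onD(3)[OF X]) simp
  finally show ?case
    using insert by simp
qed

text \<open>The Lagrange basis consists of joint eigenvectors of the compressed shifts, with pairwise
  distinct joint eigenvalues \<open>z l\<close>; an operator commuting with the shifts preserves each eigenline.\<close>
lemma eval_commuting_lagrange_basis:
  assumes X: "contraction_on (QZ m z) X"
    and comm: "\<And>k f. f \<in> QZ m z \<Longrightarrow> X (compr (QZ m z) k f) = compr (QZ m z) k (X f)"
    and "i < m" "l < m" "i \<noteq> l"
  shows "eval_series (X (lagrange_basis l)) (z i) = 0"
proof -
  obtain k where k: "z i $ k \<noteq> z l $ k"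
    using inj_onD[OF z_inj, of i l] assms(3-5) by (auto simp: Finite_Cartesian_Product.vec_eq_iff)
  have XQ: "X (lagrange_basis l) \<in> QZ m z"
    by (rule contraction_onD(1)[OF X lagrange_basis_in_QZ])
  have "z l $ k * eval_series (X (lagrange_basis l)) (z i)
      = eval_series (X (compr (QZ m z) k (lagrange_basis l))) (z i)"
    using \<open>i < m\<close>
    by (simp add: compr_lagrange_basis contraction_onD(3)[OF X lagrange_basis_in_QZ] eval_smult_QZ XQ)
  also have "\<dots> = eval_series (compr (QZ m z) k (X (lagrange_basis l))) (z i)"
    by (simp add: comm lagrange_basis_in_QZ)
  also have "\<dots> = z i $ k * eval_series (X (lagrange_basis l)) (z i)"
    using \<open>i < m\<close> by (simp add: compr_QZ[OF XQ] eval_interpolant)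
  finally show ?thesis
    using k by simp
qed

lemma eval_commuting_contraction:
  assumes X: "contraction_on (QZ m z) X"
    and comm: "\<And>k f. f \<in> QZ m z \<Longrightarrow> X (compr (QZ m z) k f) = compr (QZ m z) k (X f)"
    and "f \<in> QZ m z" "i < m"
  shows "eval_series (X f) (z i) = eval_series (X (lagrange_basis i)) (z i) * eval_series f (z i)"
proof -
  have XQ: "X (lagrange_basis l) \<in> QZ m z" for l
    by (rule contraction_onD(1)[OF X lagrange_basis_in_QZ])
  have "X f = X (\<lambda>\<alpha>. \<Sum>l<m. eval_series f (z l) * lagrange_basis l \<alpha>)"
    using lagrange_basis_expansion[OF \<open>f \<in> QZ m z\<close>] by simp
  also have "\<dots> = (\<lambda>\<alpha>. \<Sum>l<m. eval_series f (z l) * X (lagrange_basis l) \<alpha>)"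
    by (rule contraction_on_sum[OF X]) (simp_all add: lagrange_basis_in_QZ)
  finally have "eval_series (X f) (z i)
      = (\<Sum>l<m. eval_series f (z l) * eval_series (X (lagrange_basis l)) (z i))"
    using \<open>i < m\<close> by (simp add: eval_sum_QZ XQ)
  also have "\<dots>
      = (\<Sum>l<m. if l = i then eval_series f (z i) * eval_series (X (lagrange_basis i)) (z i) else 0)"
    using eval_commuting_lagrange_basis[OF X comm \<open>i < m\<close>] by (intro sum.cong) auto
  finally show ?thesis
    using \<open>i < m\<close> by simp
qed

section \<open>Diagonal operators and the Pick matrix\<close>

lemma pick_form_eq_gram_form:
  "(\<Sum>i<m. \<Sum>j<m. cnj (v i) * ((1 - w i * cnj (w j)) * szego_kernel (z i) (z j)) * v j)
     = gram_form v v - gram_form (\<lambda>j. cnj (w j) * v j) (\<lambda>j. cnj (w j) * v j)"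
  by (simp add: gram_form_def gram_def sum_distrib_left algebra_simps flip: sum_subtractf)

text \<open>The Pick matrix is positive semidefinite iff the diagonal operator
  \<open>S(\<cdot>, z i) \<mapsto> cnj (w i) S(\<cdot>, z i)\<close> is a contraction; this is the adjoint of \<open>f \<mapsto> (w i f (z i))\<^sub>i\<close>.\<close>
lemma pick_psd_iff_gram_form:
  "pick_psd m z w \<longleftrightarrow>
     (\<forall>v. Re (gram_form (\<lambda>j. cnj (w j) * v j) (\<lambda>j. cnj (w j) * v j)) \<le> Re (gram_form v v))"
  by (simp add: pick_psd_def pick_form_eq_gram_form Im_gram_form_self)

lemma gram_form_diagonal_adjoint:
  assumes "\<And>i. i < m \<Longrightarrow> (\<Sum>j<m. gram i j * x j) = w i * (\<Sum>j<m. gram i j * a j)"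
  shows "gram_form x b = gram_form a (\<lambda>j. cnj (w j) * b j)"
  unfolding gram_form_def using assms by (intro sum.cong) (auto simp: mult_ac)

text \<open>Writing \<open>\<parallel>a\<parallel>\<^sup>2\<close> for \<open>Re (gram_form a a)\<close>: from \<open>0 \<le> \<parallel>a - y\<parallel>\<^sup>2 = \<parallel>a\<parallel>\<^sup>2 - 2 \<parallel>x\<parallel>\<^sup>2 + \<parallel>y\<parallel>\<^sup>2\<close>.\<close>
lemma Re_gram_form_le_by_adjoint:
  assumes "gram_form x x = gram_form a y" and "Re (gram_form y y) \<le> Re (gram_form x x)"
  shows "Re (gram_form x x) \<le> Re (gram_form a a)"
  using Re_gram_form_self_nonneg[of "\<lambda>j. a j - y j"] assms by (simp add: Re_gram_form_diff)

lemma diagonal_kernel_comb: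
  assumes XQ: "\<And>f. f \<in> QZ m z \<Longrightarrow> X f \<in> QZ m z"
    and eval_X: "\<And>f i. f \<in> QZ m z \<Longrightarrow> i < m \<Longrightarrow> eval_series (X f) (z i) = w i * eval_series f (z i)"
  obtains x where "X (kernel_comb a) = kernel_comb x"
    and "\<And>i. i < m \<Longrightarrow> (\<Sum>j<m. gram i j * x j) = w i * (\<Sum>j<m. gram i j * a j)"
proof -
  obtain x where x: "X (kernel_comb a) = kernel_comb x"
    using XQ[of "kernel_comb a"] by (auto simp: QZ_eq_range)
  moreover have "(\<Sum>j<m. gram i j * x j) = w i * (\<Sum>j<m. gram i j * a j)" if "i < m" for i
    using eval_X[of "kernel_comb a" i] that by (simp add: x QZ_eq_range eval_kernel_comb)
  ultimately show ?thesis
    using that by blast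
qed

lemma pick_psd_if_diagonal_contraction:
  assumes XQ: "\<And>f. f \<in> QZ m z \<Longrightarrow> X f \<in> QZ m z"
    and eval_X: "\<And>f i. f \<in> QZ m z \<Longrightarrow> i < m \<Longrightarrow> eval_series (X f) (z i) = w i * eval_series f (z i)"
    and contractive: "\<And>f. f \<in> QZ m z \<Longrightarrow> h2_norm (X f) \<le> h2_norm f"
  shows "pick_psd m z w"
  unfolding pick_psd_iff_gram_form
proof
  fix v
  define y where "y = (\<lambda>j. cnj (w j) * v j)"
  obtain u where u: "X (kernel_comb y) = kernel_comb u"
    and Ku: "\<And>i. i < m \<Longrightarrow> (\<Sum>j<m. gram i j * u j) = w i * (\<Sum>j<m. gram i j * y j)"
    using diagonal_kernel_comb[OF XQ eval_X] by blast
  have "gram_form v u = cnj (gram_form u v)"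
    by (rule gram_form_swap)
  also have "gram_form u v = gram_form y y"
    using gram_form_diagonal_adjoint[of u w y v] Ku by (simp add: y_def)
  also have "cnj (gram_form y y) = gram_form y y"
    using gram_form_swap[of y y] by simp
  finally have "gram_form y y = gram_form v u"
    by simp
  moreover have "h2_norm (X (kernel_comb y)) \<le> h2_norm (kernel_comb y)"
    by (rule contractive) (simp add: QZ_eq_range)
  then have "Re (gram_form u u) \<le> Re (gram_form y y)"
    by (simp add: u h2_norm_kernel_comb)
  ultimately show "Re (gram_form y y) \<le> Re (gram_form v v)"
    by (rule Re_gram_form_le_by_adjoint)
qed

lemma diagonal_contraction_if_pick_psd:
  assumes XQ: "\<And>f. f \<in> QZ m z \<Longrightarrow> X f \<in> QZ m z"
    and eval_X: "\<And>f i. f \<in> QZ m z \<Longrightarrow> i < m \<Longrightarrow> eval_series (X f) (z i) = w i * eval_series f (z i)"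
    and "pick_psd m z w" and "f \<in> QZ m z"
  shows "h2_norm (X f) \<le> h2_norm f"
proof -
  obtain a where a: "f = kernel_comb a"
    using \<open>f \<in> QZ m z\<close> by (auto simp: QZ_eq_range)
  obtain x where x: "X (kernel_comb a) = kernel_comb x"
    and Kx: "\<And>i. i < m \<Longrightarrow> (\<Sum>j<m. gram i j * x j) = w i * (\<Sum>j<m. gram i j * a j)"
    using diagonal_kernel_comb[OF XQ eval_X] by blast
  have "gram_form x x = gram_form a (\<lambda>j. cnj (w j) * x j)"
    using gram_form_diagonal_adjoint Kx by blast
  then have "Re (gram_form x x) \<le> Re (gram_form a a)"
    using \<open>pick_psd m z w\<close> Re_gram_form_le_by_adjoint unfolding pick_psd_iff_gram_form by blast
  then show ?thesis
    by (simp add: a x h2_norm_kernel_comb)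
qed

definition diagonal_op :: "(nat \<Rightarrow> complex) \<Rightarrow> 'n coeffs \<Rightarrow> 'n coeffs" where
  "diagonal_op w f = interpolant (\<lambda>i. w i * eval_series f (z i))"

lemma diagonal_op_in_QZ: "diagonal_op w f \<in> QZ m z"
  by (simp add: diagonal_op_def interpolant_in_QZ)

lemma eval_diagonal_op: "i < m \<Longrightarrow> eval_series (diagonal_op w f) (z i) = w i * eval_series f (z i)"
  by (simp add: diagonal_op_def eval_interpolant)

lemma diagonal_op_eqI:
  "q \<in> QZ m z \<Longrightarrow> (\<And>i. i < m \<Longrightarrow> eval_series q (z i) = w i * eval_series f (z i)) \<Longrightarrow> diagonal_op w f = q"
  unfolding diagonal_op_def by (rule interpolant_unique[symmetric])

lemma contraction_on_diagonal_op:
  assumes "pick_psd m z w"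
  shows "contraction_on (QZ m z) (diagonal_op w)"
  unfolding contraction_on_def
proof (intro conjI ballI allI)
  show "diagonal_op w f \<in> QZ m z" for f
    by (rule diagonal_op_in_QZ)
  show "diagonal_op w (\<lambda>\<alpha>. f \<alpha> + g \<alpha>) = (\<lambda>\<alpha>. diagonal_op w f \<alpha> + diagonal_op w g \<alpha>)"
    if "f \<in> QZ m z" "g \<in> QZ m z" for f g
    using that by (intro diagonal_op_eqI QZ_add diagonal_op_in_QZ)
      (simp_all add: eval_add_QZ diagonal_op_in_QZ eval_diagonal_op distrib_left)
  show "diagonal_op w (\<lambda>\<alpha>. c * f \<alpha>) = (\<lambda>\<alpha>. c * diagonal_op w f \<alpha>)" if "f \<in> QZ m z" for f c
    using that by (intro diagonal_op_eqI QZ_smult diagonal_op_in_QZ)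
      (simp_all add: eval_smult_QZ diagonal_op_in_QZ eval_diagonal_op)
  show "h2_norm (diagonal_op w f) \<le> h2_norm f" if "f \<in> QZ m z" for f
    using diagonal_contraction_if_pick_psd[OF diagonal_op_in_QZ eval_diagonal_op assms that] .
qed

lemma diagonal_op_compr:
  "f \<in> QZ m z \<Longrightarrow> diagonal_op w (compr (QZ m z) k f) = compr (QZ m z) k (diagonal_op w f)"
  by (rule diagonal_op_eqI)
     (simp_all add: compr_QZ diagonal_op_in_QZ interpolant_in_QZ eval_interpolant eval_diagonal_op)

lemma pick_psd_quadratic_form:
  "pick_psd m z w \<Longrightarrow>
    Re (\<Sum>i<m. \<Sum>j<m. cnj (v i) * ((1 - w i * cnj (w j)) * szego_kernel (z i) (z j)) * v j) \<ge> 0"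
  unfolding pick_psd_def Let_def by blast

lemma pick_psd_norm_le_1:
  assumes "pick_psd m z w" and "i < m"
  shows "cmod (w i) \<le> 1"
proof -
  obtain r where r: "r > 0" "szego_kernel (z i) (z i) = of_real r"
    using szego_kernel_diagonal z_in_polydisc[OF \<open>i < m\<close>] by blast
  have "0 \<le> Re ((1 - w i * cnj (w i)) * szego_kernel (z i) (z i))"
    using psd_diagonal_nonneg[OF pick_psd_quadratic_form[OF assms(1)] \<open>i < m\<close>] .
  also have "\<dots> = (1 - (cmod (w i))\<^sup>2) * r"
    by (simp add: r flip: complex_norm_square)
  finally show ?thesis
    using r by (simp add: zero_le_mult_iff abs_square_le_1)
qed

lemma pick_psd_unimodular_imp_constant:
  assumes psd: "pick_psd m z w" and "a < m" "b < m" and "cmod (w a) = 1"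
  shows "w b = w a"
proof (cases "b = a")
  case False
  define P where "P i j = (1 - w i * cnj (w j)) * szego_kernel (z i) (z j)" for i j
  have "w a * cnj (w a) = 1"
    using \<open>cmod (w a) = 1\<close> by (simp flip: complex_norm_square)
  have "P a b = 0"
  proof (rule psd_zero_diagonal_imp_zero_entry)
    show "Re (\<Sum>i<m. \<Sum>j<m. cnj (v i) * P i j * v j) \<ge> 0" for v
      using pick_psd_quadratic_form[OF psd] by (simp add: P_def)
    show "P b a = cnj (P a b)"
      by (simp add: P_def cnj_szego_kernel mult.commute)
    show "P a a = 0"
      by (simp add: P_def \<open>w a * cnj (w a) = 1\<close>)
  qed (use assms False in auto)
  then have "w a * cnj (w b) = w a * cnj (w a)"
    using \<open>w a * cnj (w a) = 1\<close> szego_kernel_nonzero[OF z_in_polydisc z_in_polydisc, of a b] assms(2,3)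
    by (simp add: P_def)
  then show ?thesis
    using \<open>cmod (w a) = 1\<close> by auto
qed simp

text \<open>Pick data with a unimodular value are not covered by \<open>pick_set\<close>, which only concerns
  data in the open disc; for them positivity forces the data to be constant.\<close>
lemma pick_psd_interpolant:
  assumes "pick_set m z" and "pick_psd m z w"
  obtains \<phi> c where "schur \<phi>" "pw_series c \<phi>" "\<And>i. i < m \<Longrightarrow> \<phi> (z i) = w i"
proof (cases "\<forall>i<m. cmod (w i) < 1")
  case True
  then obtain \<phi> where "schur \<phi>" "\<forall>i<m. \<phi> (z i) = w i"
    using assms unfolding pick_set_def by blast
  moreover obtain c where "pw_series c \<phi>"
    using \<open>schur \<phi>\<close> unfolding schur_def by blast
  ultimately show ?thesis
    using that by blast
next
  case False
  then obtain a where "a < m" "cmod (w a) \<ge> 1"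
    by (auto simp: not_less)
  with pick_psd_norm_le_1[OF assms(2)] have "cmod (w a) = 1"
    by force
  then have "schur (\<lambda>_. w a)"
    using pw_series_const unfolding schur_def by auto
  with pw_series_const show ?thesis
    using that pick_psd_unimodular_imp_constant[OF assms(2) \<open>a < m\<close> _ \<open>cmod (w a) = 1\<close>] by metis
qed

lemma commutant_lifting_if_pick_set:
  assumes "pick_set m z"
  shows "commutant_lifting (QZ m z)"
  unfolding commutant_lifting_def
proof (intro allI impI)
  fix X
  assume "contraction_on (QZ m z) X \<and> (\<forall>k. \<forall>f\<in>QZ m z. X (compr (QZ m z) k f) = compr (QZ m z) k (X f))"
  then have X: "contraction_on (QZ m z) X"
    and comm: "\<And>k f. f \<in> QZ m z \<Longrightarrow> X (compr (QZ m z) k f) = compr (QZ m z) k (X f)"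
    by auto
  define w where "w i = eval_series (X (lagrange_basis i)) (z i)" for i
  have eval_X: "eval_series (X f) (z i) = w i * eval_series f (z i)" if "f \<in> QZ m z" "i < m" for f i
    using eval_commuting_contraction[OF X comm that] by (simp add: w_def)
  have "pick_psd m z w"
    using pick_psd_if_diagonal_contraction[OF contraction_onD(1)[OF X] eval_X]
      contraction_onD(4)[OF X] by blast
  then obtain \<phi> c where "schur \<phi>" "pw_series c \<phi>" and \<phi>: "\<And>i. i < m \<Longrightarrow> \<phi> (z i) = w i"
    using pick_psd_interpolant[OF assms] by blast
  moreover have "X f = proj (QZ m z) (toep c f)" if "f \<in> QZ m z" for f
  proof -
    have "proj (QZ m z) (toep c f) = interpolant (\<lambda>i. \<phi> (z i) * eval_series f (z i))"
      by (rule proj_toep_QZ[OF \<open>pw_series c \<phi>\<close> that])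
    also have "\<dots> = interpolant (\<lambda>i. eval_series (X f) (z i))"
      using \<phi> eval_X[OF that] by (intro interpolant_cong) simp
    also have "\<dots> = X f"
      by (rule interpolant_eval[OF contraction_onD(1)[OF X that]])
    finally show ?thesis ..
  qed
  ultimately show "\<exists>\<phi> c. schur \<phi> \<and> pw_series c \<phi> \<and> (\<forall>f\<in>QZ m z. X f = proj (QZ m z) (toep c f))"
    by blast
qed

lemma pick_set_if_commutant_lifting:
  assumes "commutant_lifting (QZ m z)"
  shows "pick_set m z"
  unfolding pick_set_def
proof (intro allI impI)
  fix w
  assume "(\<forall>i<m. cmod (w i) < 1) \<and> pick_psd m z w"
  then obtain \<phi> c where "schur \<phi>" "pw_series c \<phi>"
    and lift: "\<forall>f\<in>QZ m z. diagonal_op w f = proj (QZ m z) (toep c f)"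
    using assms contraction_on_diagonal_op diagonal_op_compr unfolding commutant_lifting_def by blast
  have "\<phi> (z i) = w i" if "i < m" for i
  proof -
    have "w i = eval_series (diagonal_op w (lagrange_basis i)) (z i)"
      using that by (simp add: eval_diagonal_op eval_lagrange_basis)
    also have "\<dots> = eval_series (proj (QZ m z) (toep c (lagrange_basis i))) (z i)"
      using lift lagrange_basis_in_QZ by simp
    also have "\<dots> = \<phi> (z i)"
      using that
      by (simp add: proj_toep_QZ[OF \<open>pw_series c \<phi>\<close> lagrange_basis_in_QZ] eval_interpolant
          eval_lagrange_basis)
    finally show ?thesis
      by simp
  qed
  with \<open>schur \<phi>\<close> show "\<exists>\<phi>. schur \<phi> \<and> (\<forall>i<m. \<phi> (z i) = w i)"
    by blast
qed

end

theorem proposition10p5: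
  fixes z :: "nat \<Rightarrow> complex ^ 'n" and m :: nat
  assumes "inj_on z {..<m}" and "\<forall>i<m. z i \<in> polydisc"
  shows "pick_set m z \<longleftrightarrow> commutant_lifting (QZ m z)"
proof -
  interpret distinct_polydisc_points m z
    using assms by unfold_locales auto
  show ?thesis
    using commutant_lifting_if_pick_set pick_set_if_commutant_lifting by blast
qed

end
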